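(* For $a\in\mathbb{R}$ define $\mathcal{L}_a:\mathcal{M}_2\to\mathcal{M}_2$ by $$\mathcal{L}_a(X)=(\operatorname{Tr}X)\,\mathbb{1}-a\,\Delta(X)-(2-a)X,\qquad \Delta(X)=P_0XP_0+P_1XP_1,$$ where $P_0=|0\rangle\langle 0|$, $P_1=|1\rangle\langle 1|$ for the standard basis $\{|0\rangle,|1\rangle\}$ of $\mathbb{C}^2$. Then $e^{t\mathcal{L}_a}$ is a unital Schwarz map for every $t\ge 0$ if and only if $a\le 3/2$.
   Context: A unital Schwarz map on $\mathcal{M}_n$ is a linear map $\Phi$ with $\Phi(\mathbb{1})=\mathbb{1}$ and $\Phi(X^\dagger X)\ge\Phi(X)^\dagger\Phi(X)$ for all $X\in\mathcal{M}_n$. Note $\mathcal{L}_a$ is self-dual with respect to the Hilbert–Schmidt inner product and $\mathcal{L}_a(\mathbb{1})=0$. *)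

theory Defs
  imports "HOL-Analysis.Analysis"
begin

text \<open>2x2 complex matrices, rows/columns indexed by the type 2 (elements 1, 2);
  index 1 corresponds to basis vector |0>, index 2 to |1>.\<close>
type_synonym mat2 = "complex ^ 2 ^ 2"

definition cscale :: "complex \<Rightarrow> mat2 \<Rightarrow> mat2" where
  "cscale c X = (\<chi> i j. c * X $ i $ j)"

definition adjoint2 :: "mat2 \<Rightarrow> mat2" where
  "adjoint2 A = (\<chi> i j. cnj (A $ j $ i))"

definition psd2 :: "mat2 \<Rightarrow> bool" where
  "psd2 A \<longleftrightarrow> (\<forall>v :: complex ^ 2.
     (\<Sum>i\<in>UNIV. cnj (v $ i) * (A *v v) $ i) \<in> \<real> \<and>
     Re (\<Sum>i\<in>UNIV. cnj (v $ i) * (A *v v) $ i) \<ge> 0)"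

definition unital_schwarz :: "(mat2 \<Rightarrow> mat2) \<Rightarrow> bool" where
  "unital_schwarz \<Phi> \<longleftrightarrow>
     (\<forall>X Y. \<Phi> (X + Y) = \<Phi> X + \<Phi> Y) \<and>
     (\<forall>c X. \<Phi> (cscale c X) = cscale c (\<Phi> X)) \<and>
     \<Phi> (mat 1) = mat 1 \<and>
     (\<forall>X. psd2 (\<Phi> (adjoint2 X ** X) - adjoint2 (\<Phi> X) ** \<Phi> X))"

definition P0 :: mat2 where "P0 = (\<chi> i j. if i = 1 \<and> j = 1 then 1 else 0)"
definition P1 :: mat2 where "P1 = (\<chi> i j. if i = 2 \<and> j = 2 then 1 else 0)"

definition Dephase :: "mat2 \<Rightarrow> mat2" where
  "Dephase X = P0 ** X ** P0 + P1 ** X ** P1"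

definition Lgen :: "real \<Rightarrow> mat2 \<Rightarrow> mat2" where
  "Lgen a X = cscale (trace X) (mat 1) - a *\<^sub>R Dephase X - (2 - a) *\<^sub>R X"

definition expL :: "real \<Rightarrow> (mat2 \<Rightarrow> mat2) \<Rightarrow> mat2 \<Rightarrow> mat2" where
  "expL t L X = (\<Sum>n. (t ^ n / fact n) *\<^sub>R (L ^^ n) X)"

end

theory Submission
  imports Defs
begin

text \<open>Split X into its trace part, its traceless diagonal part and its off-diagonal part.
  These are eigenspaces of L_a with eigenvalues 0, -2 and a - 2, so e^{tL_a} keeps the
  trace part, damps the traceless diagonal part by p = e^{-2t} and the off-diagonal part
  by q = e^{(a-2)t}. For such a map the Schwarz defect is a Hermitian 2x2 matrix which
  is positive semidefinite for all X iff q^2 \<le> (1+p)/2: necessity is read off at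
  X = |1><0|, sufficiency is a determinant estimate. Finally, comparing derivatives at
  t = 0 shows that e^{(2a-4)t} \<le> (1 + e^{-2t})/2 for all t \<ge> 0 forces 2a - 4 \<le> -1,
  and conversely then e^{(2a-4)t} \<le> e^{-t} \<le> (1 + e^{-2t})/2.\<close>

lemma mat2_eq_iff:
  "(A::mat2) = B \<longleftrightarrow> A$1$1 = B$1$1 \<and> A$1$2 = B$1$2 \<and> A$2$1 = B$2$1 \<and> A$2$2 = B$2$2"
  by (auto simp: vec_eq_iff forall_2)

lemma trace_mat2: "trace (X::mat2) = X$1$1 + X$2$2"
  by (simp add: trace_def sum_2)

lemma Lgen_components:
  "Lgen a X $ 1 $ 1 = X$2$2 - X$1$1"
  "Lgen a X $ 2 $ 2 = X$1$1 - X$2$2"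
  "Lgen a X $ 1 $ 2 = of_real (a - 2) * X$1$2"
  "Lgen a X $ 2 $ 1 = of_real (a - 2) * X$2$1"
  by (simp_all add: Lgen_def cscale_def Dephase_def P0_def P1_def matrix_matrix_mult_def
      sum_2 trace_mat2 mat_def scaleR_conv_of_real[where 'a = complex] algebra_simps)

definition trace_part :: "mat2 \<Rightarrow> mat2" where
  "trace_part X = (\<chi> i j. if i = j then trace X / 2 else 0)"

definition traceless_diag_part :: "mat2 \<Rightarrow> mat2" where
  "traceless_diag_part X = (\<chi> i j. if i = j then X$i$j - trace X / 2 else 0)"

definition offdiag_part :: "mat2 \<Rightarrow> mat2" where
  "offdiag_part X = (\<chi> i j. if i = j then 0 else X$i$j)"

lemmas mat2_part_defs = trace_part_def traceless_diag_part_def offdiag_part_def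

lemma funpow_Lgen:
  "(Lgen a ^^ n) X =
     0^n *\<^sub>R trace_part X + (-2)^n *\<^sub>R traceless_diag_part X + (a-2)^n *\<^sub>R offdiag_part X"
proof (induction n)
  case 0
  show ?case
    by (simp add: mat2_eq_iff mat2_part_defs trace_mat2
        scaleR_conv_of_real[where 'a = complex] field_simps)
next
  case (Suc n)
  show ?case
    by (simp add: Suc mat2_eq_iff mat2_part_defs trace_mat2 Lgen_components
        scaleR_conv_of_real[where 'a = complex] field_simps)
qed

lemma expL_eigen_sum:
  assumes "\<And>n. (L ^^ n) X = l1^n *\<^sub>R A + l2^n *\<^sub>R B + l3^n *\<^sub>R C"
  shows "expL t L X = exp (l1*t) *\<^sub>R A + exp (l2*t) *\<^sub>R B + exp (l3*t) *\<^sub>R C"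
proof -
  have exp_sums: "(\<lambda>n. ((l*t)^n / fact n) *\<^sub>R M) sums (exp (l*t) *\<^sub>R M)" for l and M :: mat2
    using sums_scaleR_left[OF exp_converges[of "l*t"]] by (simp add: divide_inverse_commute)
  have "(\<lambda>n. (t^n / fact n) *\<^sub>R (L ^^ n) X) =
      (\<lambda>n. ((l1*t)^n / fact n) *\<^sub>R A + ((l2*t)^n / fact n) *\<^sub>R B + ((l3*t)^n / fact n) *\<^sub>R C)"
    by (simp add: assms power_mult_distrib scaleR_add_right mult.commute)
  also have "\<dots> sums (exp (l1*t) *\<^sub>R A + exp (l2*t) *\<^sub>R B + exp (l3*t) *\<^sub>R C)"
    by (intro sums_add exp_sums)
  finally show ?thesis
    unfolding expL_def by (rule sums_unique[symmetric])
qed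

definition Phi :: "real \<Rightarrow> real \<Rightarrow> mat2 \<Rightarrow> mat2" where
  "Phi p q X = trace_part X + p *\<^sub>R traceless_diag_part X + q *\<^sub>R offdiag_part X"

lemma expL_Lgen: "expL t (Lgen a) = Phi (exp (-2*t)) (exp ((a-2)*t))"
  using expL_eigen_sum[OF funpow_Lgen] by (simp add: Phi_def fun_eq_iff)

lemma Phi_components:
  "Phi p q X $ 1 $ 1 = of_real ((1+p)/2) * X$1$1 + of_real ((1-p)/2) * X$2$2"
  "Phi p q X $ 2 $ 2 = of_real ((1-p)/2) * X$1$1 + of_real ((1+p)/2) * X$2$2"
  "Phi p q X $ 1 $ 2 = of_real q * X$1$2"
  "Phi p q X $ 2 $ 1 = of_real q * X$2$1"
  by (simp_all add: Phi_def mat2_part_defs trace_mat2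
      scaleR_conv_of_real[where 'a = complex] field_simps)

lemma Phi_add: "Phi p q (X + Y) = Phi p q X + Phi p q Y"
  by (simp add: mat2_eq_iff Phi_components algebra_simps)

lemma Phi_cscale: "Phi p q (cscale c X) = cscale c (Phi p q X)"
  by (simp add: mat2_eq_iff Phi_components cscale_def algebra_simps)

lemma Phi_mat_1: "Phi p q (mat 1) = mat 1"
  by (simp add: mat2_eq_iff Phi_components mat_def flip: of_real_add of_real_divide)
    (simp add: field_simps)

definition schwarz_defect :: "(mat2 \<Rightarrow> mat2) \<Rightarrow> mat2 \<Rightarrow> mat2" where
  "schwarz_defect \<Phi> X = \<Phi> (adjoint2 X ** X) - adjoint2 (\<Phi> X) ** \<Phi> X"

lemma unital_schwarz_iff_psd2_defect:
  "unital_schwarz \<Phi> \<longleftrightarrow>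
     (\<forall>X Y. \<Phi> (X + Y) = \<Phi> X + \<Phi> Y) \<and> (\<forall>c X. \<Phi> (cscale c X) = cscale c (\<Phi> X)) \<and>
     \<Phi> (mat 1) = mat 1 \<and> (\<forall>X. psd2 (schwarz_defect \<Phi> X))"
  unfolding unital_schwarz_def schwarz_defect_def ..

lemma schwarz_defect_Phi_components:
  "schwarz_defect (Phi p q) X $ 1 $ 1 =
     of_real (((1+p)/2) * ((1-p)/2) * (cmod (X$1$1 - X$2$2))^2
       + ((1+p)/2 - q^2) * (cmod (X$2$1))^2 + ((1-p)/2) * (cmod (X$1$2))^2)"
  "schwarz_defect (Phi p q) X $ 2 $ 2 =
     of_real (((1+p)/2) * ((1-p)/2) * (cmod (X$1$1 - X$2$2))^2
       + ((1+p)/2 - q^2) * (cmod (X$1$2))^2 + ((1-p)/2) * (cmod (X$2$1))^2)"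
  "schwarz_defect (Phi p q) X $ 1 $ 2 = of_real (q * ((1-p)/2)) *
     (cnj (X$1$1 - X$2$2) * X$1$2 - cnj (X$2$1) * (X$1$1 - X$2$2))"
  "schwarz_defect (Phi p q) X $ 2 $ 1 = cnj (schwarz_defect (Phi p q) X $ 1 $ 2)"
  unfolding of_real_add of_real_mult complex_norm_square
  by (simp_all add: schwarz_defect_def Phi_components adjoint2_def matrix_matrix_mult_def
      sum_2 field_simps) (simp_all add: algebra_simps power2_eq_square)

lemma weighted_amgm:
  fixes r1 r2 c x y :: real
  assumes "0 \<le> r1" "0 \<le> r2" "0 \<le> c" "0 \<le> x" "0 \<le> y" "c^2 \<le> r1 * r2"
  shows "2 * c * x * y \<le> r1 * x^2 + r2 * y^2"
proof -
  have "(2 * c * x * y)^2 = 4 * c^2 * (x^2 * y^2)" by algebra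
  also have "\<dots> \<le> 4 * (r1 * r2) * (x^2 * y^2)"
    using assms(6) by (intro mult_right_mono) simp_all
  also have "\<dots> \<le> (r1 * x^2 - r2 * y^2)^2 + 4 * (r1 * r2) * (x^2 * y^2)" by simp
  also have "\<dots> = (r1 * x^2 + r2 * y^2)^2" by algebra
  finally have "(2 * c * x * y)^2 \<le> (r1 * x^2 + r2 * y^2)^2" .
  moreover have "0 \<le> r1 * x^2 + r2 * y^2"
    using assms by simp
  ultimately show ?thesis
    by (rule power2_le_imp_le)
qed

lemma psd2_hermitianI:
  fixes D :: mat2
  assumes D11: "D$1$1 = of_real r1" and D22: "D$2$2 = of_real r2" and D21: "D$2$1 = cnj (D$1$2)"
    and "0 \<le> r1" "0 \<le> r2" "(cmod (D$1$2))^2 \<le> r1 * r2"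
  shows "psd2 D"
  unfolding psd2_def
proof
  fix v :: "complex^2"
  define z where "z = cnj (v$1) * D$1$2 * v$2"
  define R where "R = r1 * (cmod (v$1))^2 + r2 * (cmod (v$2))^2 + 2 * Re z"
  have "(\<Sum>i\<in>UNIV. cnj (v$i) * (D *v v) $ i)
      = of_real r1 * (v$1 * cnj (v$1)) + of_real r2 * (v$2 * cnj (v$2)) + (z + cnj z)"
    by (simp add: sum_2 matrix_vector_mult_def D11 D22 D21 z_def algebra_simps)
  also have "\<dots> = of_real R"
    unfolding R_def complex_add_cnj complex_norm_square[symmetric] by simp
  finally have quadratic_form: "(\<Sum>i\<in>UNIV. cnj (v$i) * (D *v v) $ i) = of_real R" .
  have "cmod z = cmod (D$1$2) * cmod (v$1) * cmod (v$2)"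
    by (simp add: z_def norm_mult)
  then have "- (cmod (D$1$2) * cmod (v$1) * cmod (v$2)) \<le> Re z"
    using abs_Re_le_cmod[of z] by linarith
  moreover have "2 * cmod (D$1$2) * cmod (v$1) * cmod (v$2)
      \<le> r1 * (cmod (v$1))^2 + r2 * (cmod (v$2))^2"
    using assms by (intro weighted_amgm) auto
  ultimately have "0 \<le> R" unfolding R_def by linarith
  then show "(\<Sum>i\<in>UNIV. cnj (v$i) * (D *v v) $ i) \<in> \<real> \<and>
      0 \<le> Re (\<Sum>i\<in>UNIV. cnj (v$i) * (D *v v) $ i)"
    unfolding quadratic_form by simp
qed

lemma psd2_diag_nonneg:
  assumes "psd2 D"
  shows "0 \<le> Re (D$1$1)"
proof -
  have "(\<Sum>i\<in>UNIV. cnj (axis 1 1 $ i) * (D *v axis 1 1) $ i) = D$1$1"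
    by (simp add: sum_2 matrix_vector_mult_def axis_def)
  then show ?thesis
    using assms unfolding psd2_def by metis
qed

lemma Phi_defect_det_bound:
  fixes lam mu q r u v :: real
  assumes "0 \<le> lam" "0 \<le> mu" "q^2 \<le> lam" "0 \<le> r" "0 \<le> u" "0 \<le> v"
  shows "q^2 * mu^2 * r^2 * (u + v)^2
    \<le> (lam * mu * r^2 + (lam - q^2) * v^2 + mu * u^2)
      * (lam * mu * r^2 + (lam - q^2) * u^2 + mu * v^2)"
proof -
  define g where "g = lam - q^2"
  have "0 \<le> g" using assms unfolding g_def by simp
  have "(lam * mu * r^2 + g * v^2 + mu * u^2) * (lam * mu * r^2 + g * u^2 + mu * v^2)
      - (lam - g) * mu^2 * r^2 * (u + v)^2
     = mu^2 * (lam * r^2 - u * v)^2 + lam * mu * g * r^2 * (u^2 + v^2)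
       + g * mu^2 * r^2 * (u^2 + v^2) + 2 * g * mu^2 * r^2 * u * v + g^2 * u^2 * v^2 + g * mu * (u^4 + v^4)"
    by algebra
  also have "\<dots> \<ge> 0"
    using assms \<open>0 \<le> g\<close> by (intro add_nonneg_nonneg mult_nonneg_nonneg) auto
  finally show ?thesis unfolding g_def by simp
qed

lemma psd2_schwarz_defect_Phi:
  assumes "0 \<le> p" "p \<le> 1" "0 \<le> q" "q^2 \<le> (1+p)/2"
  shows "psd2 (schwarz_defect (Phi p q) X)"
proof -
  define lam where "lam = (1+p)/2"
  define mu where "mu = (1-p)/2"
  define r where "r = cmod (X$1$1 - X$2$2)"
  define u where "u = cmod (X$1$2)"
  define v where "v = cmod (X$2$1)"
  have "0 \<le> lam" "0 \<le> mu" "q^2 \<le> lam"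
    using assms unfolding lam_def mu_def by auto
  have "cmod (schwarz_defect (Phi p q) X $ 1 $ 2)
      = q * mu * cmod (cnj (X$1$1 - X$2$2) * X$1$2 - cnj (X$2$1) * (X$1$1 - X$2$2))"
    unfolding schwarz_defect_Phi_components norm_mult norm_of_real mu_def using assms by simp
  also have "\<dots> \<le> q * mu * (r * u + v * r)"
    using norm_triangle_ineq4[of "cnj (X$1$1 - X$2$2) * X$1$2" "cnj (X$2$1) * (X$1$1 - X$2$2)"]
      assms \<open>0 \<le> mu\<close>
    unfolding r_def u_def v_def
    by (intro mult_left_mono) (simp_all add: norm_mult del: complex_cnj_diff)
  finally have "(cmod (schwarz_defect (Phi p q) X $ 1 $ 2))^2 \<le> (q * mu * (r * u + v * r))^2"
    by (rule power_mono) simp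
  also have "\<dots> = q^2 * mu^2 * r^2 * (u + v)^2"
    by algebra
  also have "\<dots> \<le> (lam * mu * r^2 + (lam - q^2) * v^2 + mu * u^2)
      * (lam * mu * r^2 + (lam - q^2) * u^2 + mu * v^2)"
    using \<open>0 \<le> lam\<close> \<open>0 \<le> mu\<close> \<open>q^2 \<le> lam\<close>
    by (intro Phi_defect_det_bound) (simp_all add: r_def u_def v_def)
  finally show ?thesis
    using \<open>0 \<le> lam\<close> \<open>0 \<le> mu\<close> \<open>q^2 \<le> lam\<close>
    by (intro psd2_hermitianI[of _ "lam * mu * r^2 + (lam - q^2) * v^2 + mu * u^2"
          "lam * mu * r^2 + (lam - q^2) * u^2 + mu * v^2"])
      (simp_all add: schwarz_defect_Phi_components lam_def mu_def r_def u_def v_def)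
qed

lemma unital_schwarz_Phi_iff:
  assumes "0 \<le> p" "p \<le> 1" "0 \<le> q"
  shows "unital_schwarz (Phi p q) \<longleftrightarrow> q^2 \<le> (1+p)/2"
proof
  assume "unital_schwarz (Phi p q)"
  then have "psd2 (schwarz_defect (Phi p q) (\<chi> i j. if i = 2 \<and> j = 1 then 1 else 0))"
    unfolding unital_schwarz_iff_psd2_defect by blast
  then show "q^2 \<le> (1+p)/2"
    using psd2_diag_nonneg by (force simp: schwarz_defect_Phi_components)
next
  assume "q^2 \<le> (1+p)/2"
  then show "unital_schwarz (Phi p q)"
    using assms unfolding unital_schwarz_iff_psd2_defect
    by (simp add: Phi_add Phi_cscale Phi_mat_1 psd2_schwarz_defect_Phi)
qed

lemma exp_le_mean_exp_iff:
  fixes c :: real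
  shows "(\<forall>t\<ge>0. exp (c * t) \<le> (1 + exp (-2 * t)) / 2) \<longleftrightarrow> c \<le> -1"
proof
  assume bound: "\<forall>t\<ge>0. exp (c * t) \<le> (1 + exp (-2 * t)) / 2"
  show "c \<le> -1"
  proof (rule ccontr)
    assume "\<not> c \<le> -1"
    define f where "f t = exp (c * t) - (1 + exp (-2 * t)) / 2" for t
    have "DERIV f 0 :> c + 1"
      unfolding f_def by (auto intro!: derivative_eq_intros)
    moreover have "0 < c + 1"
      using \<open>\<not> c \<le> -1\<close> by simp
    ultimately obtain d where "0 < d" and increasing: "\<forall>h>0. h < d \<longrightarrow> f 0 < f (0 + h)"
      by (metis DERIV_pos_inc_right)
    then show False
      using increasing[rule_format, of "d/2"] bound[rule_format, of "d/2"] by (simp add: f_def)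
  qed
next
  assume "c \<le> -1"
  show "\<forall>t\<ge>0. exp (c * t) \<le> (1 + exp (-2 * t)) / 2"
  proof (intro allI impI)
    fix t :: real
    assume "0 \<le> t"
    then have "exp (c * t) \<le> exp (-t)"
      using mult_right_mono[OF \<open>c \<le> -1\<close> \<open>0 \<le> t\<close>] by simp
    also have "\<dots> \<le> (1 + exp (-t)^2) / 2"
      using sum_squares_ge_zero[of "1 - exp (-t)" 0] by (simp add: power2_eq_square algebra_simps)
    also have "exp (-t)^2 = exp (-2 * t)"
      by (simp flip: exp_of_nat_mult)
    finally show "exp (c * t) \<le> (1 + exp (-2 * t)) / 2" .
  qed
qed

theorem mainTheorem5:
  fixes a :: real
  shows "(\<forall>t::real. t \<ge> 0 \<longrightarrow> unital_schwarz (expL t (Lgen a))) \<longleftrightarrow> a \<le> 3/2"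
proof -
  have "unital_schwarz (expL t (Lgen a)) \<longleftrightarrow> exp ((2*a - 4) * t) \<le> (1 + exp (-2 * t)) / 2"
    if "0 \<le> t" for t
  proof -
    have "exp ((a - 2) * t)^2 = exp ((2*a - 4) * t)"
      by (simp flip: exp_of_nat_mult add: algebra_simps)
    then show ?thesis
      using that by (simp add: expL_Lgen unital_schwarz_Phi_iff)
  qed
  then have "(\<forall>t::real. t \<ge> 0 \<longrightarrow> unital_schwarz (expL t (Lgen a)))
      \<longleftrightarrow> (\<forall>t\<ge>0. exp ((2*a - 4) * t) \<le> (1 + exp (-2 * t)) / 2)"
    by auto
  also have "\<dots> \<longleftrightarrow> a \<le> 3/2"
    unfolding exp_le_mean_exp_iff by linarith
  finally show ?thesis .
qed

end
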